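(* If $Q$ is a quadrilateral in $K^2$ in standard form, then the centroid of $Q$ is the origin if and only if the vertices of $Q$ are the vertices of a parallelogram.
   Context: $K$ is a field of characteristic $\neq 2$. A quadrilateral $Q=ABA'B'$ consists of four distinct lines $A,B,A',B'$ (sides) in $K^2$, not all through one point, with adjacent sides ($A,B$; $B,A'$; $A',B'$; $B',A$) not parallel; opposite sides may be parallel. Vertices: $A\cap B$, $B\cap A'$, $A'\cap B'$, $B'\cap A$ (two may coincide if three sides are concurrent). The centroid is the average of the four vertices (equivalently the midpoint of the midpoints of the diagonals). $Q$ is in standard form if $A$ is the line $Y=0$ and $A'$ is the line $X=0$. A parallelogram is a quadrilateral whose pairs of opposite sides are parallel. *)

theory Defs
  imports Main
begin

definition is_line :: "('a::field \<times> 'a) set \<Rightarrow> bool" where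
  "is_line L \<longleftrightarrow> (\<exists>a b c. (a \<noteq> 0 \<or> b \<noteq> 0) \<and> L = {p. a * fst p + b * snd p = c})"

definition parallel :: "('a::field \<times> 'a) set \<Rightarrow> ('a \<times> 'a) set \<Rightarrow> bool" where
  "parallel L M \<longleftrightarrow> L = M \<or> L \<inter> M = {}"

text \<open>Quadrilateral Q = A B A' B' (sides in cyclic order).\<close>
definition quadrilateral ::
  "('a::field \<times> 'a) set \<Rightarrow> ('a \<times> 'a) set \<Rightarrow> ('a \<times> 'a) set \<Rightarrow> ('a \<times> 'a) set \<Rightarrow> bool" where
  "quadrilateral A B A' B' \<longleftrightarrow>
     is_line A \<and> is_line B \<and> is_line A' \<and> is_line B' \<and>
     distinct [A, B, A', B'] \<and>
     A \<inter> B \<inter> A' \<inter> B' = {} \<and>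
     \<not> parallel A B \<and> \<not> parallel B A' \<and> \<not> parallel A' B' \<and> \<not> parallel B' A"

definition meet :: "('a \<times> 'a) set \<Rightarrow> ('a \<times> 'a) set \<Rightarrow> 'a \<times> 'a" where
  "meet L M = (THE p. p \<in> L \<inter> M)"

definition quad_vertices ::
  "('a::field \<times> 'a) set \<Rightarrow> ('a \<times> 'a) set \<Rightarrow> ('a \<times> 'a) set \<Rightarrow> ('a \<times> 'a) set \<Rightarrow> ('a \<times> 'a) list" where
  "quad_vertices A B A' B' = [meet A B, meet B A', meet A' B', meet B' A]"

definition centroid ::
  "('a::field \<times> 'a) set \<Rightarrow> ('a \<times> 'a) set \<Rightarrow> ('a \<times> 'a) set \<Rightarrow> ('a \<times> 'a) set \<Rightarrow> 'a \<times> 'a" where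
  "centroid A B A' B' =
     (let vs = quad_vertices A B A' B' in
       (sum_list (map fst vs) / 4, sum_list (map snd vs) / 4))"

definition standard_form ::
  "('a::field \<times> 'a) set \<Rightarrow> ('a \<times> 'a) set \<Rightarrow> ('a \<times> 'a) set \<Rightarrow> ('a \<times> 'a) set \<Rightarrow> bool" where
  "standard_form A B A' B' \<longleftrightarrow>
     quadrilateral A B A' B' \<and> A = {p. snd p = 0} \<and> A' = {p. fst p = 0}"

definition parallelogram ::
  "('a::field \<times> 'a) set \<Rightarrow> ('a \<times> 'a) set \<Rightarrow> ('a \<times> 'a) set \<Rightarrow> ('a \<times> 'a) set \<Rightarrow> bool" where
  "parallelogram A B A' B' \<longleftrightarrow>
     quadrilateral A B A' B' \<and> parallel A A' \<and> parallel B B'"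

end

theory Submission
  imports Defs "HOL-Library.Product_Plus"
begin

text \<open>In standard form the vertices are (x1,0), (0,y1), (0,y2), (x2,0), so the centroid vanishes
  iff x2 = -x1 and y2 = -y1; these four points are then the vertices of the rhombus bounded by the
  lines \<plusminus>x/x1 \<plusminus> y/y1 = 1. Conversely, the diagonals of a parallelogram bisect each other,
  v1 + v3 = v2 + v4 (the difference is orthogonal to the normals of two adjacent sides), so the four
  points split into two pairs with equal sums. For points on the axes only the split
  {(x1,0),(x2,0)}, {(0,y1),(0,y2)} can do this without two points coinciding, and for it equal sums
  mean x1 + x2 = 0 = y1 + y2.\<close>

definition dot :: "'a::field \<times> 'a \<Rightarrow> 'a \<times> 'a \<Rightarrow> 'a" where
  "dot n p = fst n * fst p + snd n * snd p"

definition cross :: "'a::field \<times> 'a \<Rightarrow> 'a \<times> 'a \<Rightarrow> 'a" where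
  "cross n m = fst n * snd m - snd n * fst m"

lemma dot_diff: "dot n (p - q) = dot n p - dot n q"
  by (simp add: dot_def algebra_simps)

lemma dot_eq_0_if_cross_eq_0:
  assumes "n \<noteq> 0" "cross n m = 0" "dot n d = 0"
  shows "dot m d = 0"
proof (cases "fst n = 0")
  case True
  with assms have "snd n \<noteq> 0" by (simp add: zero_prod_def prod_eq_iff)
  with True assms have "snd d = 0" "fst m = 0" by (auto simp: dot_def cross_def)
  then show ?thesis by (simp add: dot_def)
next
  case False
  have "fst n * dot m d = fst m * dot n d + cross n m * snd d"
    by (simp add: dot_def cross_def algebra_simps)
  with assms False show ?thesis by simp
qed

lemma eq_0_if_dot_eq_0:
  assumes "cross n m \<noteq> 0" "dot n d = 0" "dot m d = 0"
  shows "d = 0"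
proof -
  have "cross n m * fst d = snd m * dot n d - snd n * dot m d"
    and "cross n m * snd d = fst n * dot m d - fst m * dot n d"
    by (simp_all add: dot_def cross_def algebra_simps)
  with assms show ?thesis by (simp add: prod_eq_iff)
qed

lemma exists_common_point_if_cross_ne_0:
  assumes "cross n m \<noteq> 0"
  shows "\<exists>p. dot n p = c \<and> dot m p = e"
proof
  define D where "D = cross n m"
  let ?p = "((c * snd m - e * snd n) / D, (fst n * e - fst m * c) / D)"
  have "D \<noteq> 0" using assms D_def by simp
  then have "D * dot n ?p = fst n * (c * snd m - e * snd n) + snd n * (fst n * e - fst m * c)"
    and "D * dot m ?p = fst m * (c * snd m - e * snd n) + snd m * (fst n * e - fst m * c)"
    by (simp_all add: dot_def field_simps)
  then have "D * dot n ?p = D * c" "D * dot m ?p = D * e"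
    by (simp_all add: D_def cross_def algebra_simps)
  with \<open>D \<noteq> 0\<close> show "dot n ?p = c \<and> dot m ?p = e" by simp
qed

lemma is_line_iff: "is_line L \<longleftrightarrow> (\<exists>n c. n \<noteq> 0 \<and> L = {p. dot n p = c})"
  unfolding is_line_def dot_def by (auto simp: zero_prod_def)

lemma is_lineE:
  assumes "is_line L"
  obtains n c where "n \<noteq> 0" "L = {p. dot n p = c}"
  using assms unfolding is_line_iff by blast

lemma dot_diff_eq_0_if_on_line:
  "L = {p. dot n p = c} \<Longrightarrow> p \<in> L \<Longrightarrow> q \<in> L \<Longrightarrow> dot n (p - q) = 0"
  by (simp add: dot_diff)

lemma cross_ne_0_if_not_parallel:
  assumes L: "L = {p. dot n p = c}" and M: "M = {p. dot m p = e}"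
    and "n \<noteq> 0" "m \<noteq> 0" and "\<not> parallel L M"
  shows "cross n m \<noteq> 0"
proof
  assume cross: "cross n m = 0"
  then have cross': "cross m n = 0" by (simp add: cross_def algebra_simps)
  from \<open>\<not> parallel L M\<close> obtain p where p: "p \<in> L" "p \<in> M" unfolding parallel_def by blast
  have "r \<in> L \<longleftrightarrow> r \<in> M" for r
  proof -
    have "r \<in> L \<longleftrightarrow> dot n (r - p) = 0" and "r \<in> M \<longleftrightarrow> dot m (r - p) = 0"
      using p L M by (auto simp: dot_diff)
    then show ?thesis
      using dot_eq_0_if_cross_eq_0[OF \<open>n \<noteq> 0\<close> cross] dot_eq_0_if_cross_eq_0[OF \<open>m \<noteq> 0\<close> cross']
      by blast
  qed
  then have "L = M" by blast
  with \<open>\<not> parallel L M\<close> show False unfolding parallel_def by simp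
qed

lemma cross_eq_0_if_parallel:
  assumes "L = {p. dot n p = c}" "M = {p. dot m p = e}" "parallel L M" "L \<noteq> M"
  shows "cross n m = 0"
proof (rule ccontr)
  assume "cross n m \<noteq> 0"
  then obtain p where "dot n p = c" "dot m p = e" using exists_common_point_if_cross_ne_0 by blast
  with assms show False unfolding parallel_def by blast
qed

lemma meet_eqI:
  assumes "is_line L" "is_line M" "\<not> parallel L M" "p \<in> L" "p \<in> M"
  shows "meet L M = p"
  unfolding meet_def
proof (rule the_equality)
  obtain n c where "n \<noteq> 0" and L: "L = {p. dot n p = c}" using assms(1) by (rule is_lineE)
  obtain m e where "m \<noteq> 0" and M: "M = {p. dot m p = e}" using assms(2) by (rule is_lineE)
  have cross: "cross n m \<noteq> 0"
    using cross_ne_0_if_not_parallel[OF L M \<open>n \<noteq> 0\<close> \<open>m \<noteq> 0\<close> assms(3)] .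
  show "p \<in> L \<inter> M" using assms by blast
  fix q assume "q \<in> L \<inter> M"
  then have "q - p = 0"
    using eq_0_if_dot_eq_0[OF cross] dot_diff_eq_0_if_on_line[OF L] dot_diff_eq_0_if_on_line[OF M]
      assms by blast
  then show "q = p" by simp
qed

lemma meet_in_lines:
  assumes "is_line L" "is_line M" "\<not> parallel L M"
  shows "meet L M \<in> L" "meet L M \<in> M"
proof -
  from assms(3) obtain p where "p \<in> L" "p \<in> M" unfolding parallel_def by blast
  with meet_eqI[OF assms] show "meet L M \<in> L" "meet L M \<in> M" by simp_all
qed

lemma dot_diff_eq_0_if_on_parallel:
  assumes L: "L = {p. dot n p = c}" and M: "M = {p. dot m p = e}" and "m \<noteq> 0"
    and "parallel L M" and "p \<in> M" "q \<in> M"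
  shows "dot n (p - q) = 0"
proof (cases "L = M")
  case True
  with assms show ?thesis by (simp add: dot_diff)
next
  case False
  with cross_eq_0_if_parallel[OF L M] assms have "cross m n = 0"
    by (simp add: cross_def algebra_simps)
  with dot_eq_0_if_cross_eq_0 dot_diff_eq_0_if_on_line[OF M] assms show ?thesis by blast
qed

lemma quadrilateral_vertices_on_sides:
  assumes "quadrilateral A B A' B'"
  shows "meet A B \<in> A \<inter> B" "meet B A' \<in> B \<inter> A'" "meet A' B' \<in> A' \<inter> B'" "meet B' A \<in> B' \<inter> A"
proof -
  have "is_line A" "is_line B" "is_line A'" "is_line B'"
    and "\<not> parallel A B" "\<not> parallel B A'" "\<not> parallel A' B'" "\<not> parallel B' A"
    using assms unfolding quadrilateral_def by simp_all
  then show "meet A B \<in> A \<inter> B" "meet B A' \<in> B \<inter> A'" "meet A' B' \<in> A' \<inter> B'"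
    "meet B' A \<in> B' \<inter> A"
    by (simp_all add: meet_in_lines)
qed

lemma parallelogram_vertices_distinct:
  assumes "parallelogram P1 P2 P3 P4"
  shows "distinct (quad_vertices P1 P2 P3 P4)"
proof -
  have quad: "quadrilateral P1 P2 P3 P4" using assms unfolding parallelogram_def by simp
  have "parallel P1 P3" "parallel P2 P4" "P1 \<noteq> P3" "P2 \<noteq> P4"
    using assms unfolding parallelogram_def quadrilateral_def by simp_all
  then have "P1 \<inter> P3 = {}" "P2 \<inter> P4 = {}" unfolding parallel_def by simp_all
  with quadrilateral_vertices_on_sides[OF quad] show ?thesis
    unfolding quad_vertices_def by auto
qed

lemma parallelogram_diagonals_bisect:
  assumes "parallelogram P1 P2 P3 P4"
  shows "meet P1 P2 + meet P3 P4 = meet P2 P3 + meet P4 P1"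
proof -
  have quad: "quadrilateral P1 P2 P3 P4" and "parallel P1 P3" "parallel P2 P4"
    using assms unfolding parallelogram_def by auto
  have lines: "is_line P1" "is_line P2" "is_line P3" "is_line P4"
    using quad unfolding quadrilateral_def by auto
  obtain n1 c1 where "n1 \<noteq> 0" and P1: "P1 = {p. dot n1 p = c1}"
    using lines(1) by (rule is_lineE)
  obtain n2 c2 where "n2 \<noteq> 0" and P2: "P2 = {p. dot n2 p = c2}"
    using lines(2) by (rule is_lineE)
  obtain n3 c3 where "n3 \<noteq> 0" and P3: "P3 = {p. dot n3 p = c3}"
    using lines(3) by (rule is_lineE)
  obtain n4 c4 where "n4 \<noteq> 0" and P4: "P4 = {p. dot n4 p = c4}"
    using lines(4) by (rule is_lineE)
  define v1 v2 v3 v4 where "v1 = meet P1 P2" "v2 = meet P2 P3" "v3 = meet P3 P4" "v4 = meet P4 P1"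
  note on_sides = quadrilateral_vertices_on_sides[OF quad, folded v1_v2_v3_v4_def]
  have "dot n1 (v1 - v4) = 0" "dot n1 (v2 - v3) = 0"
    using dot_diff_eq_0_if_on_line[OF P1] dot_diff_eq_0_if_on_parallel[OF P1 P3 \<open>n3 \<noteq> 0\<close>]
      \<open>parallel P1 P3\<close> on_sides by blast+
  moreover have "dot n1 (v1 + v3 - (v2 + v4)) = dot n1 (v1 - v4) - dot n1 (v2 - v3)"
    by (simp add: dot_def algebra_simps)
  ultimately have n1: "dot n1 (v1 + v3 - (v2 + v4)) = 0" by simp
  have "dot n2 (v1 - v2) = 0" "dot n2 (v4 - v3) = 0"
    using dot_diff_eq_0_if_on_line[OF P2] dot_diff_eq_0_if_on_parallel[OF P2 P4 \<open>n4 \<noteq> 0\<close>]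
      \<open>parallel P2 P4\<close> on_sides by blast+
  moreover have "dot n2 (v1 + v3 - (v2 + v4)) = dot n2 (v1 - v2) - dot n2 (v4 - v3)"
    by (simp add: dot_def algebra_simps)
  ultimately have n2: "dot n2 (v1 + v3 - (v2 + v4)) = 0" by simp
  have "cross n1 n2 \<noteq> 0"
    using cross_ne_0_if_not_parallel[OF P1 P2 \<open>n1 \<noteq> 0\<close> \<open>n2 \<noteq> 0\<close>] quad
    unfolding quadrilateral_def by blast
  then have "v1 + v3 - (v2 + v4) = 0" using n1 n2 by (rule eq_0_if_dot_eq_0)
  then show ?thesis unfolding v1_v2_v3_v4_def by simp
qed

definition intercept_line :: "'a::field \<Rightarrow> 'a \<Rightarrow> ('a \<times> 'a) set" where
  "intercept_line a b = {p. fst p / a + snd p / b = 1}"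

lemma is_line_intercept_line: "a \<noteq> 0 \<Longrightarrow> is_line (intercept_line a b)"
  unfolding is_line_def intercept_line_def
  by (rule exI[of _ "1 / a"], rule exI[of _ "1 / b"]) auto

lemma intercept_line_x_axis: "a \<noteq> 0 \<Longrightarrow> (x, 0) \<in> intercept_line a b \<longleftrightarrow> x = a"
  by (simp add: intercept_line_def)

lemma intercept_line_y_axis: "b \<noteq> 0 \<Longrightarrow> (0, y) \<in> intercept_line a b \<longleftrightarrow> y = b"
  by (simp add: intercept_line_def)

lemma intercept_line_opposite_disjoint:
  assumes "(2::'a::field) \<noteq> 0"
  shows "intercept_line a b \<inter> intercept_line (- a) (- b) = ({} :: ('a \<times> 'a) set)"
proof -
  have "p \<notin> intercept_line a b \<inter> intercept_line (- a) (- b)" for p :: "'a \<times> 'a"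
  proof
    assume "p \<in> intercept_line a b \<inter> intercept_line (- a) (- b)"
    then have "1 + 1 = fst p / a + snd p / b + (fst p / - a + snd p / - b)"
      unfolding intercept_line_def by simp
    also have "\<dots> = 0" by simp
    finally show False using assms by simp
  qed
  then show ?thesis by blast
qed

lemma rhombus_parallelogram:
  fixes a b :: "'a::field"
  assumes "(2::'a) \<noteq> 0" "a \<noteq> 0" "b \<noteq> 0"
  defines "L \<equiv> intercept_line"
  shows "parallelogram (L a b) (L (- a) b) (L (- a) (- b)) (L a (- b))"
    and "quad_vertices (L a b) (L (- a) b) (L (- a) (- b)) (L a (- b)) =
      [(0, b), (- a, 0), (0, - b), (a, 0)]"
proof -
  have "a + a \<noteq> 0" "b + b \<noteq> 0"
    using assms(1-3) by (simp_all flip: mult_2)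
  then have "a \<noteq> - a" "b \<noteq> - b" by (simp_all add: eq_neg_iff_add_eq_0)
  then have on_axes:
    "(a, 0) \<in> L a b" "(a, 0) \<in> L a (- b)" "(a, 0) \<notin> L (- a) b" "(a, 0) \<notin> L (- a) (- b)"
    "(- a, 0) \<in> L (- a) b" "(- a, 0) \<in> L (- a) (- b)"
    "(0, b) \<in> L a b" "(0, b) \<in> L (- a) b" "(0, b) \<notin> L a (- b)" "(0, b) \<notin> L (- a) (- b)"
    "(0, - b) \<in> L (- a) (- b)" "(0, - b) \<in> L a (- b)"
    using assms(2,3) unfolding L_def by (auto simp: intercept_line_x_axis intercept_line_y_axis)
  have lines: "is_line (L a b)" "is_line (L (- a) b)" "is_line (L (- a) (- b))" "is_line (L a (- b))"
    using assms(2) unfolding L_def by (simp_all add: is_line_intercept_line)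
  have disjoint: "L a b \<inter> L (- a) (- b) = {}" "L (- a) b \<inter> L a (- b) = {}"
    using intercept_line_opposite_disjoint[OF assms(1), of a b]
      intercept_line_opposite_disjoint[OF assms(1), of "- a" b]
    unfolding L_def by simp_all
  have "\<not> parallel (L a b) (L (- a) b)" "\<not> parallel (L (- a) b) (L (- a) (- b))"
    "\<not> parallel (L (- a) (- b)) (L a (- b))" "\<not> parallel (L a (- b)) (L a b)"
    using on_axes unfolding parallel_def by blast+
  moreover have "distinct [L a b, L (- a) b, L (- a) (- b), L a (- b)]"
    using on_axes by (simp; blast)
  ultimately have quad: "quadrilateral (L a b) (L (- a) b) (L (- a) (- b)) (L a (- b))"
    unfolding quadrilateral_def using lines disjoint by blast
  then show "parallelogram (L a b) (L (- a) b) (L (- a) (- b)) (L a (- b))"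
    unfolding parallelogram_def parallel_def using disjoint by simp
  from quad show "quad_vertices (L a b) (L (- a) b) (L (- a) (- b)) (L a (- b)) =
      [(0, b), (- a, 0), (0, - b), (a, 0)]"
    unfolding quad_vertices_def quadrilateral_def using on_axes by (simp add: meet_eqI)
qed

lemma sum_list_eq_if_distinct_same_set:
  fixes xs ys :: "'a::comm_monoid_add list"
  assumes "distinct xs" "distinct ys" "set xs = set ys"
  shows "sum_list xs = sum_list ys"
  using assms sum_list_distinct_conv_sum_set[of xs id] sum_list_distinct_conv_sum_set[of ys id]
  by simp

lemma parallelogram_on_axes_centred:
  fixes x1 y1 y2 x2 :: "'a::field"
  assumes dist: "distinct [v1, v2, v3, v4]" and bisect: "v1 + v3 = v2 + v4"
    and vertices: "set [v1, v2, v3, v4] = set [(x1, 0), (0, y1), (0, y2), (x2, 0)]"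
  shows "x1 + x2 = 0 \<and> y1 + y2 = 0"
proof -
  let ?ps = "[(x1, 0), (0, y1), (0, y2), (x2, 0)]"
  have "card (set ?ps) = 4" using vertices distinct_card[OF dist] by simp
  then have dist_ps: "distinct ?ps" by (intro card_distinct) simp
  have "(x1 + x2, y1 + y2) = sum_list ?ps" by simp
  also have "\<dots> = sum_list [v1, v2, v3, v4]"
    using sum_list_eq_if_distinct_same_set[OF dist_ps dist] vertices by simp
  also have "\<dots> = (v1 + v3) + (v1 + v3)" using bisect by (simp add: algebra_simps)
  finally have sum: "(x1 + x2, y1 + y2) = (v1 + v3) + (v1 + v3)" .
  have "v1 \<in> set ?ps" "v3 \<in> set ?ps" "v1 \<noteq> v3" using vertices dist by auto
  then show ?thesis
    using sum dist_ps
    by (simp only: set_simps insert_iff empty_iff simp_thms) (elim disjE; simp add: add.commute)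
qed

lemma standard_form_vertices:
  fixes A B A' B' :: "('a::field \<times> 'a) set"
  assumes "standard_form A B A' B'"
  obtains x1 y1 y2 x2 where "quad_vertices A B A' B' = [(x1, 0), (0, y1), (0, y2), (x2, 0)]"
    and "x1 \<noteq> 0 \<or> x2 \<noteq> 0" and "y1 \<noteq> 0 \<or> y2 \<noteq> 0"
proof -
  have quad: "quadrilateral A B A' B'" and A: "A = {p. snd p = 0}" and A': "A' = {p. fst p = 0}"
    using assms unfolding standard_form_def by blast+
  note on_sides = quadrilateral_vertices_on_sides[OF quad]
  let ?x1 = "fst (meet A B)" and ?y1 = "snd (meet B A')"
    and ?y2 = "snd (meet A' B')" and ?x2 = "fst (meet B' A)"
  have vertices: "quad_vertices A B A' B' = [(?x1, 0), (0, ?y1), (0, ?y2), (?x2, 0)]"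
    using on_sides unfolding quad_vertices_def A A' by (simp add: prod_eq_iff)
  have "(0, 0) \<in> A \<inter> A'" and "(0, 0) \<notin> A \<inter> B \<inter> A' \<inter> B'"
    using quad A A' unfolding quadrilateral_def by simp_all
  then have "(0, 0) \<notin> B \<inter> B'" by blast
  moreover have "(?x1, 0) \<in> B" "(?x2, 0) \<in> B'" "(0, ?y1) \<in> B" "(0, ?y2) \<in> B'"
    using on_sides vertices unfolding quad_vertices_def by auto
  ultimately have "?x1 \<noteq> 0 \<or> ?x2 \<noteq> 0" "?y1 \<noteq> 0 \<or> ?y2 \<noteq> 0" by auto
  with vertices show ?thesis by (rule that)
qed

lemma centroid_eq_0_iff_axis_vertices:
  fixes x1 y1 y2 x2 :: "'a::field"
  assumes "(2::'a) \<noteq> 0" "quad_vertices A B A' B' = [(x1, 0), (0, y1), (0, y2), (x2, 0)]"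
  shows "centroid A B A' B' = (0, 0) \<longleftrightarrow> x1 + x2 = 0 \<and> y1 + y2 = 0"
proof -
  have "(4::'a) \<noteq> 0" using assms(1) by (metis mult_eq_0_iff numeral_Bit0_eq_double mult_2_right)
  with assms(2) show ?thesis unfolding centroid_def by simp
qed

theorem corollary4p5:
  fixes A B A' B' :: "('a::field \<times> 'a) set"
  assumes char: "(2::'a) \<noteq> 0"
    and std: "standard_form A B A' B'"
  shows "centroid A B A' B' = (0, 0) \<longleftrightarrow>
    (\<exists>P1 P2 P3 P4 :: ('a \<times> 'a) set. parallelogram P1 P2 P3 P4 \<and>
        set (quad_vertices A B A' B') = set (quad_vertices P1 P2 P3 P4))"
proof -
  obtain x1 y1 y2 x2 where vertices: "quad_vertices A B A' B' = [(x1, 0), (0, y1), (0, y2), (x2, 0)]"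
    and "x1 \<noteq> 0 \<or> x2 \<noteq> 0" "y1 \<noteq> 0 \<or> y2 \<noteq> 0"
    using std by (rule standard_form_vertices)
  note centroid_iff = centroid_eq_0_iff_axis_vertices[OF char vertices]
  show ?thesis
  proof
    assume "centroid A B A' B' = (0, 0)"
    then have "x2 = - x1" "y2 = - y1" "x1 \<noteq> 0" "y1 \<noteq> 0"
      using centroid_iff \<open>x1 \<noteq> 0 \<or> x2 \<noteq> 0\<close> \<open>y1 \<noteq> 0 \<or> y2 \<noteq> 0\<close>
      by (auto simp: eq_neg_iff_add_eq_0 add.commute)
    note rhombus = rhombus_parallelogram[OF char \<open>x1 \<noteq> 0\<close> \<open>y1 \<noteq> 0\<close>]
    have "set (quad_vertices A B A' B') = set (quad_vertices
        (intercept_line x1 y1) (intercept_line (- x1) y1)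
        (intercept_line (- x1) (- y1)) (intercept_line x1 (- y1)))"
      unfolding vertices rhombus(2) \<open>x2 = - x1\<close> \<open>y2 = - y1\<close> by auto
    with rhombus(1) show "\<exists>P1 P2 P3 P4. parallelogram P1 P2 P3 P4 \<and>
        set (quad_vertices A B A' B') = set (quad_vertices P1 P2 P3 P4)"
      by blast
  next
    assume "\<exists>P1 P2 P3 P4. parallelogram P1 P2 P3 P4 \<and>
        set (quad_vertices A B A' B') = set (quad_vertices P1 P2 P3 P4)"
    then obtain P1 P2 P3 P4 where pg: "parallelogram P1 P2 P3 P4"
      and same: "set (quad_vertices A B A' B') = set (quad_vertices P1 P2 P3 P4)" by blast
    have "x1 + x2 = 0 \<and> y1 + y2 = 0"
      using parallelogram_on_axes_centred parallelogram_vertices_distinct[OF pg]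
        parallelogram_diagonals_bisect[OF pg] same vertices
      unfolding quad_vertices_def by (metis (no_types))
    with centroid_iff show "centroid A B A' B' = (0, 0)" by simp
  qed
qed

end
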